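(* Let $\mathbf f$ be an AHK model for a relational signature $S$, let $n\geq1$ and $\omega\in\Omega^{(n)}$ with $p:=\mathbf f\downarrow[n](\omega)>0$. Let $O\subseteq\Omega^{(n+1)}$ be the set of $(n+1)$-worlds $\omega'$ with $\omega'\downarrow[n]=\omega$ and $\omega'\downarrow(1,\dots,n-1,n+1)=\omega$. Then $\mathbf f\downarrow[n+1](O)\geq p^2$.
   Context: A relational signature $S$ is a finite set of relation symbols; $a=\mathrm{arity}(S)\geq1$ is the maximal arity. An $n$-world has domain $[n]$ and, for each $m$-ary $r\in S$, an adjacency array $A_r:[n]^m\to\{0,1\}$; $\Omega^{(n)}$ is the set of $n$-worlds. $\omega'\downarrow[n]$ is the restriction of $\omega'$ to $[n]$; for a tuple $\mathbf i=(i_1,\dots,i_m)$ of distinct elements, $\omega'\downarrow\mathbf i$ is the sub-world induced by $\{i_1,\dots,i_m\}$ relabeled via $i_h\mapsto h$. $\langle\mathbb N\rangle^m$ denotes strictly increasing $m$-tuples of naturals. For an $m$-world $\omega$, $D_m(\omega)$ is the collection of restrictions of $A_r(\omega)$ ($r\in S$ of arity $\geq m$) to argument tuples with exactly $m$ distinct elements; $\mathcal T_m$ is its set of possible values, on which permutations of $[m]$ act by relabeling. AHK model: i.i.d. uniform $[0,1]$ variables $U_{\mathbf i}$, $\mathbf i\in\langle\mathbb N\rangle^m$, $m=0,\dots,a$ (including $U_\emptyset$), and measurable functions $f^m:[0,1]^{2^m}\to\mathcal T_m$ ($m=1,\dots,a$); for $\mathbf i\in\langle\mathbb N\rangle^m$,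 $D_{\mathbf i}=f^m(\mathbf U_{\mathbf i})$ where $\mathbf U_{\mathbf i}$ lists all $U_{\mathbf i'}$, $\mathbf i'\subseteq\mathbf i$, in lexicographic order. Each $f^m$ is permutation equivariant: $f^m(\pi\mathbf x)=\pi f^m(\mathbf x)$ for every permutation $\pi$ of $[m]$, where $\pi$ acts on $[0,1]^{2^m}$ (coordinates indexed by subsets of $[m]$) by placing in the position of subset $I$ the coordinate of subset $\pi I$. The $D_{\mathbf i}$ determine a random world on $\mathbb N$ whose sub-world on $\mathbf i$ has arity-$m$ data $D_{\mathbf i}$; $\mathbf f\downarrow[n]$ is the distribution of its restriction to $[n]$. *)

theory Defs
  imports "HOL-Probability.Probability" "HOL-Combinatorics.Permutations"
begin

text \<open>A world on [n] = {1..n} is encoded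
  by its adjacency data: w r xs is A_r(xs) for r \<in> S and argument tuples xs (lists of
  length ar r with entries in [n]); it is False on every other input.\<close>

type_synonym 'r world = "'r \<Rightarrow> nat list \<Rightarrow> bool"

definition signature :: "'r set \<Rightarrow> ('r \<Rightarrow> nat) \<Rightarrow> bool" where
  "signature S ar \<longleftrightarrow> finite S \<and> S \<noteq> {} \<and> (\<forall>r\<in>S. 1 \<le> ar r)"

definition arity_max :: "'r set \<Rightarrow> ('r \<Rightarrow> nat) \<Rightarrow> nat" where
  "arity_max S ar = Max (ar ` S)"

definition is_world :: "'r set \<Rightarrow> ('r \<Rightarrow> nat) \<Rightarrow> nat \<Rightarrow> 'r world \<Rightarrow> bool" where
  "is_world S ar n w \<longleftrightarrow>
     (\<forall>r xs. w r xs \<longrightarrow> r \<in> S \<and> length xs = ar r \<and> set xs \<subseteq> {1..n})"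

definition worlds :: "'r set \<Rightarrow> ('r \<Rightarrow> nat) \<Rightarrow> nat \<Rightarrow> 'r world set" where
  "worlds S ar n = {w. is_world S ar n w}"

definition restr_world :: "nat \<Rightarrow> 'r world \<Rightarrow> 'r world" where
  "restr_world n w = (\<lambda>r xs. set xs \<subseteq> {1..n} \<and> w r xs)"

definition sub_world :: "nat list \<Rightarrow> 'r world \<Rightarrow> 'r world" where
  "sub_world is w = (\<lambda>r xs. set xs \<subseteq> {1..length is} \<and> w r (map (\<lambda>h. is ! (h - 1)) xs))"

text \<open>T_m: possible values of the arity-m data D_m(w) of an m-world, i.e. the
  restrictions of A_r (r \<in> S) to argument tuples using exactly the m elements of [m]
  (encoded as functions that are False outside this domain).\<close>
definition data_space :: "'r set \<Rightarrow> ('r \<Rightarrow> nat) \<Rightarrow> nat \<Rightarrow> 'r world set" where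
  "data_space S ar m =
     {D. \<forall>r xs. D r xs \<longrightarrow> r \<in> S \<and> length xs = ar r \<and> set xs = {1..m}}"

definition perm_data :: "(nat \<Rightarrow> nat) \<Rightarrow> 'r world \<Rightarrow> 'r world" where
  "perm_data \<pi> D = (\<lambda>r xs. D r (map \<pi> xs))"

definition perm_input :: "nat \<Rightarrow> (nat \<Rightarrow> nat) \<Rightarrow> (nat set \<Rightarrow> real) \<Rightarrow> (nat set \<Rightarrow> real)" where
  "perm_input m \<pi> x = (\<lambda>I\<in>Pow {1..m}. x (\<pi> ` I))"

definition unit_interval :: "real measure" where
  "unit_interval = restrict_space lborel {0..1}"

definition cube :: "nat \<Rightarrow> (nat set \<Rightarrow> real) measure" where
  "cube m = PiM (Pow {1..m}) (\<lambda>_. unit_interval)"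

definition AHK_model ::
  "'r set \<Rightarrow> ('r \<Rightarrow> nat) \<Rightarrow> (nat \<Rightarrow> (nat set \<Rightarrow> real) \<Rightarrow> 'r world) \<Rightarrow> bool" where
  "AHK_model S ar f \<longleftrightarrow> signature S ar \<and>
     (\<forall>m\<in>{1..arity_max S ar}.
        f m \<in> cube m \<rightarrow>\<^sub>M count_space (data_space S ar m) \<and>
        (\<forall>\<pi> x. \<pi> permutes {1..m} \<longrightarrow> x \<in> space (cube m) \<longrightarrow>
           f m (perm_input m \<pi> x) = perm_data \<pi> (f m x)))"

definition U_space :: "nat \<Rightarrow> (nat set \<Rightarrow> real) measure" where
  "U_space a = PiM {A. finite A \<and> card A \<le> a} (\<lambda>_. unit_interval)"

text \<open>Rank (1-based position) of x in the finite set E.\<close>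
definition rank :: "nat set \<Rightarrow> nat \<Rightarrow> nat" where
  "rank E x = card {y\<in>E. y \<le> x}"

definition block_data ::
  "(nat \<Rightarrow> (nat set \<Rightarrow> real) \<Rightarrow> 'r world) \<Rightarrow> (nat set \<Rightarrow> real) \<Rightarrow> nat set \<Rightarrow> 'r world" where
  "block_data f U E =
     (let m = card E; L = sorted_list_of_set E
      in f m (\<lambda>I\<in>Pow {1..m}. U ((\<lambda>h. L ! (h - 1)) ` I)))"

text \<open>The random world on \<nat> determined by the D_i: A_r(xs) is read off from the data of
  the set of distinct entries of xs, after relabelling.\<close>
definition ahk_world ::
  "'r set \<Rightarrow> ('r \<Rightarrow> nat) \<Rightarrow> (nat \<Rightarrow> (nat set \<Rightarrow> real) \<Rightarrow> 'r world) \<Rightarrow> (nat set \<Rightarrow> real) \<Rightarrow> 'r world" where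
  "ahk_world S ar f U = (\<lambda>r xs. r \<in> S \<and> length xs = ar r \<and>
       block_data f U (set xs) r (map (rank (set xs)) xs))"

definition ahk_dist ::
  "'r set \<Rightarrow> ('r \<Rightarrow> nat) \<Rightarrow> (nat \<Rightarrow> (nat set \<Rightarrow> real) \<Rightarrow> 'r world) \<Rightarrow> nat \<Rightarrow> 'r world measure" where
  "ahk_dist S ar f n = distr (U_space (arity_max S ar)) (count_space (worlds S ar n))
      (\<lambda>U. restr_world n (ahk_world S ar f U))"

end

theory Submission
  imports Defs
begin

text \<open>The world on [n] is a function of the variables U_A with A \<subseteq> [n]. Since the tuple
  (1, ..., n-1, n+1) is increasing, the world it induces is the same function of the relabelled
  variables U_(\<tau> A), where \<tau> maps n to n+1 and fixes [n-1]. The two families share the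
  variables U_A with n \<notin> A and are independent otherwise. Conditionally on the shared
  variables the two events are therefore independent with a common conditional probability \<phi>,
  so both occur with probability E[\<phi>^2] \<ge> (E \<phi>)^2 = p^2.\<close>

section \<open>Two relabelled copies of an event in a product space\<close>

lemma (in product_sigma_finite) product_nn_integral_fold3:
  assumes "K0 \<inter> (K1 \<union> K2) = {}" "K1 \<inter> K2 = {}" "finite K0" "finite K1" "finite K2"
    and [measurable]: "u \<in> borel_measurable (PiM (K0 \<union> (K1 \<union> K2)) M)"
  shows "(\<integral>\<^sup>+x. u x \<partial>PiM (K0 \<union> (K1 \<union> K2)) M)
       = (\<integral>\<^sup>+a. \<integral>\<^sup>+b. \<integral>\<^sup>+c. u (merge K0 (K1 \<union> K2) (a, merge K1 K2 (b, c)))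
            \<partial>PiM K2 M \<partial>PiM K1 M \<partial>PiM K0 M)"
proof -
  have "(\<integral>\<^sup>+x. u x \<partial>PiM (K0 \<union> (K1 \<union> K2)) M)
      = (\<integral>\<^sup>+a. \<integral>\<^sup>+z. u (merge K0 (K1 \<union> K2) (a, z)) \<partial>PiM (K1 \<union> K2) M \<partial>PiM K0 M)"
    using assms by (intro product_nn_integral_fold) auto
  also have "\<dots> = (\<integral>\<^sup>+a. \<integral>\<^sup>+b. \<integral>\<^sup>+c. u (merge K0 (K1 \<union> K2) (a, merge K1 K2 (b, c)))
            \<partial>PiM K2 M \<partial>PiM K1 M \<partial>PiM K0 M)"
  proof (rule nn_integral_cong)
    fix a assume "a \<in> space (PiM K0 M)"
    then show "(\<integral>\<^sup>+z. u (merge K0 (K1 \<union> K2) (a, z)) \<partial>PiM (K1 \<union> K2) M)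
        = (\<integral>\<^sup>+b. \<integral>\<^sup>+c. u (merge K0 (K1 \<union> K2) (a, merge K1 K2 (b, c))) \<partial>PiM K2 M \<partial>PiM K1 M)"
      using assms by (intro product_nn_integral_fold) auto
  qed
  finally show ?thesis .
qed

lemma nn_integral_PiM_reindex:
  assumes "\<And>i. i \<in> K \<Longrightarrow> prob_space (M i)" "inj_on \<sigma> I" "\<sigma> \<in> I \<rightarrow> K"
    and "u \<in> borel_measurable (\<Pi>\<^sub>M i\<in>I. M (\<sigma> i))"
  shows "(\<integral>\<^sup>+x. u (\<lambda>i\<in>I. x (\<sigma> i)) \<partial>PiM K M) = (\<integral>\<^sup>+y. u y \<partial>(\<Pi>\<^sub>M i\<in>I. M (\<sigma> i)))"
proof -
  have [measurable]: "(\<lambda>x. \<lambda>i\<in>I. x (\<sigma> i)) \<in> PiM K M \<rightarrow>\<^sub>M (\<Pi>\<^sub>M i\<in>I. M (\<sigma> i))"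
    using assms(3) by (intro measurable_restrict measurable_component_singleton) auto
  show ?thesis
    using assms by (subst distr_PiM_reindex[symmetric]) (auto simp: nn_integral_distr)
qed

lemma (in prob_space) nn_integral_square_le:
  assumes [measurable]: "u \<in> borel_measurable M"
  shows "(\<integral>\<^sup>+x. u x \<partial>M)\<^sup>2 \<le> (\<integral>\<^sup>+x. (u x)\<^sup>2 \<partial>M)"
  using Cauchy_Schwarz_nn_integral[of u M "\<lambda>_. 1"] by (simp add: emeasure_space_1)

lemma restrict_merge_merge:
  "restrict (merge K0 (K1 \<union> K2) (a, merge K1 K2 (b, c))) (K0 \<union> K1) = merge K0 K1 (a, b)"
  by (auto simp: fun_eq_iff merge_def)

lemma reindex_merge_merge:
  assumes "K0 \<inter> K2 = {}" "K1 \<inter> K2 = {}" "\<And>i. i \<in> K0 \<Longrightarrow> \<sigma> i = i" "\<sigma> \<in> K1 \<rightarrow> K2"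
  shows "(\<lambda>i\<in>K0 \<union> K1. merge K0 (K1 \<union> K2) (a, merge K1 K2 (b, c)) (\<sigma> i))
       = merge K0 K1 (a, \<lambda>i\<in>K1. c (\<sigma> i))"
  using assms by (auto simp: fun_eq_iff merge_def)

context prob_space
begin

lemma emeasure_PiM_reindexed_pair:
  assumes fin: "finite K0" "finite K1" "finite K2"
    and disj: "K0 \<inter> K1 = {}" "K0 \<inter> K2 = {}" "K1 \<inter> K2 = {}"
    and fix0: "\<And>i. i \<in> K0 \<Longrightarrow> \<sigma> i = i"
    and \<sigma>: "inj_on \<sigma> K1" "\<sigma> \<in> K1 \<rightarrow> K2"
    and B[measurable]: "B \<in> sets (PiM (K0 \<union> K1) (\<lambda>_. M))"
  shows "emeasure (PiM (K0 \<union> (K1 \<union> K2)) (\<lambda>_. M))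
        {x \<in> space (PiM (K0 \<union> (K1 \<union> K2)) (\<lambda>_. M)).
           restrict x (K0 \<union> K1) \<in> B \<and> (\<lambda>i\<in>K0 \<union> K1. x (\<sigma> i)) \<in> B}
    = (\<integral>\<^sup>+a. (\<integral>\<^sup>+b. indicator B (merge K0 K1 (a, b)) \<partial>PiM K1 (\<lambda>_. M))\<^sup>2 \<partial>PiM K0 (\<lambda>_. M))"
    (is "emeasure (?P (K0 \<union> (K1 \<union> K2))) ?E = (\<integral>\<^sup>+a. (?\<phi> a)\<^sup>2 \<partial>?P K0)")
proof -
  interpret product_sigma_finite "\<lambda>_. M"
    by (simp add: product_sigma_finite_def sigma_finite_measure_axioms)
  have [measurable]: "(\<lambda>x. \<lambda>i\<in>K0 \<union> K1. x (\<sigma> i)) \<in> ?P (K0 \<union> (K1 \<union> K2)) \<rightarrow>\<^sub>M ?P (K0 \<union> K1)"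
    using fix0 \<sigma>(2) by (intro measurable_restrict measurable_component_singleton) auto
  have [measurable]: "(\<lambda>x. restrict x (K0 \<union> K1)) \<in> ?P (K0 \<union> (K1 \<union> K2)) \<rightarrow>\<^sub>M ?P (K0 \<union> K1)"
    by (rule measurable_restrict_subset) auto
  have [measurable]: "(\<lambda>c. \<lambda>i\<in>K1. c (\<sigma> i)) \<in> ?P K2 \<rightarrow>\<^sub>M ?P K1"
    using \<sigma>(2) by (intro measurable_restrict measurable_component_singleton) auto
  have copy: "(\<integral>\<^sup>+c. indicator B (merge K0 K1 (a, \<lambda>i\<in>K1. c (\<sigma> i))) \<partial>?P K2) = ?\<phi> a"
    if "a \<in> space (?P K0)" for a
    using that \<sigma> prob_space_axioms by (subst nn_integral_PiM_reindex) auto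
  have split: "indicator ?E (merge K0 (K1 \<union> K2) (a, merge K1 K2 (b, c)))
      = indicator B (merge K0 K1 (a, b)) * (indicator B (merge K0 K1 (a, \<lambda>i\<in>K1. c (\<sigma> i))) :: ennreal)"
    if "a \<in> space (?P K0)" "b \<in> space (?P K1)" "c \<in> space (?P K2)" for a b c
    using that disj fix0 \<sigma>(2)
    by (auto simp: restrict_merge_merge reindex_merge_merge space_PiM PiE_iff indicator_def
        split: split_merge)
  have "emeasure (?P (K0 \<union> (K1 \<union> K2))) ?E = (\<integral>\<^sup>+x. indicator ?E x \<partial>?P (K0 \<union> (K1 \<union> K2)))"
    by (rule nn_integral_indicator[symmetric]) measurable
  also have "\<dots> = (\<integral>\<^sup>+a. \<integral>\<^sup>+b. \<integral>\<^sup>+c. indicator ?E (merge K0 (K1 \<union> K2) (a, merge K1 K2 (b, c)))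
        \<partial>?P K2 \<partial>?P K1 \<partial>?P K0)"
    using fin disj by (intro product_nn_integral_fold3) auto
  also have "\<dots> = (\<integral>\<^sup>+a. \<integral>\<^sup>+b. \<integral>\<^sup>+c. indicator B (merge K0 K1 (a, b))
        * indicator B (merge K0 K1 (a, \<lambda>i\<in>K1. c (\<sigma> i))) \<partial>?P K2 \<partial>?P K1 \<partial>?P K0)"
    by (intro nn_integral_cong) (simp add: split)
  also have "\<dots> = (\<integral>\<^sup>+a. \<integral>\<^sup>+b. indicator B (merge K0 K1 (a, b)) * ?\<phi> a \<partial>?P K1 \<partial>?P K0)"
    by (intro nn_integral_cong) (simp add: nn_integral_cmult copy del: merge_restrict)
  also have "\<dots> = (\<integral>\<^sup>+a. (?\<phi> a)\<^sup>2 \<partial>?P K0)"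
    by (intro nn_integral_cong) (simp add: nn_integral_multc power2_eq_square)
  finally show ?thesis .
qed

lemma emeasure_PiM_square_le_reindexed:
  assumes fin: "finite K0" "finite K1" "finite K2"
    and disj: "K0 \<inter> K1 = {}" "K0 \<inter> K2 = {}" "K1 \<inter> K2 = {}"
    and fix0: "\<And>i. i \<in> K0 \<Longrightarrow> \<sigma> i = i"
    and \<sigma>: "inj_on \<sigma> K1" "\<sigma> \<in> K1 \<rightarrow> K2"
    and B[measurable]: "B \<in> sets (PiM (K0 \<union> K1) (\<lambda>_. M))"
  shows "(emeasure (PiM (K0 \<union> K1) (\<lambda>_. M)) B)\<^sup>2
    \<le> emeasure (PiM (K0 \<union> (K1 \<union> K2)) (\<lambda>_. M))
        {x \<in> space (PiM (K0 \<union> (K1 \<union> K2)) (\<lambda>_. M)).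
           restrict x (K0 \<union> K1) \<in> B \<and> (\<lambda>i\<in>K0 \<union> K1. x (\<sigma> i)) \<in> B}"
proof -
  interpret product_sigma_finite "\<lambda>_. M"
    by (simp add: product_sigma_finite_def sigma_finite_measure_axioms)
  have prob_P: "prob_space (PiM K (\<lambda>_. M))" for K
    by (intro prob_space_PiM prob_space_axioms)
  interpret P1: prob_space "PiM K1 (\<lambda>_. M)"
    by (rule prob_P)
  define \<phi> where "\<phi> a = (\<integral>\<^sup>+b. indicator B (merge K0 K1 (a, b)) \<partial>PiM K1 (\<lambda>_. M))" for a
  have [measurable]: "\<phi> \<in> borel_measurable (PiM K0 (\<lambda>_. M))"
    unfolding \<phi>_def by measurable
  have "emeasure (PiM (K0 \<union> K1) (\<lambda>_. M)) B = (\<integral>\<^sup>+a. \<phi> a \<partial>PiM K0 (\<lambda>_. M))"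
    unfolding \<phi>_def using fin disj by (subst product_nn_integral_fold[symmetric]) auto
  then show ?thesis
    using prob_space.nn_integral_square_le[OF prob_P[of K0], of \<phi>]
    by (simp add: emeasure_PiM_reindexed_pair[OF assms] \<phi>_def)
qed

lemma emeasure_PiM_restrict_preimage:
  assumes "finite F" "F \<subseteq> I" "A \<in> sets (PiM F (\<lambda>_. M))"
  shows "emeasure (PiM I (\<lambda>_. M)) {x \<in> space (PiM I (\<lambda>_. M)). restrict x F \<in> A}
    = emeasure (PiM F (\<lambda>_. M)) A"
proof -
  interpret product_prob_space "\<lambda>_. M" I
    by unfold_locales
  have "{x \<in> space (PiM I (\<lambda>_. M)). restrict x F \<in> A} = prod_emb I (\<lambda>_. M) F A"
    by (auto simp: prod_emb_def space_PiM)
  with assms show ?thesis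
    by (simp add: emeasure_PiM_emb')
qed

lemma measure_PiM_square_le_reindexed:
  assumes fin: "finite K" and KI: "K \<subseteq> I" "\<sigma> ` K \<subseteq> I" and inj: "inj_on \<sigma> K"
    and moved: "\<And>i. i \<in> K \<Longrightarrow> \<sigma> i \<in> K \<Longrightarrow> \<sigma> i = i"
    and B: "B \<in> sets (PiM K (\<lambda>_. M))"
  shows "(measure (PiM I (\<lambda>_. M)) {x \<in> space (PiM I (\<lambda>_. M)). restrict x K \<in> B})\<^sup>2
    \<le> measure (PiM I (\<lambda>_. M))
        {x \<in> space (PiM I (\<lambda>_. M)). restrict x K \<in> B \<and> (\<lambda>i\<in>K. x (\<sigma> i)) \<in> B}"
    (is "(measure ?Q ?A)\<^sup>2 \<le> measure ?Q ?AA")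
proof -
  define K0 where "K0 = {i \<in> K. \<sigma> i = i}"
  define K1 where "K1 = K - K0"
  define F where "F = K0 \<union> (K1 \<union> \<sigma> ` K1)"
  have K: "K = K0 \<union> K1"
    by (auto simp: K0_def K1_def)
  have F: "finite F" "F \<subseteq> I" "\<And>i. i \<in> K \<Longrightarrow> i \<in> F" "\<And>i. i \<in> K \<Longrightarrow> \<sigma> i \<in> F"
    using fin KI by (auto simp: F_def K0_def K1_def)
  let ?E = "{y \<in> space (PiM F (\<lambda>_. M)). restrict y K \<in> B \<and> (\<lambda>i\<in>K. y (\<sigma> i)) \<in> B}"
  have core: "(emeasure (PiM K (\<lambda>_. M)) B)\<^sup>2 \<le> emeasure (PiM F (\<lambda>_. M)) ?E"
    unfolding F_def K
  proof (rule emeasure_PiM_square_le_reindexed)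
    show "B \<in> sets (PiM (K0 \<union> K1) (\<lambda>_. M))"
      using B K by simp
  qed (use fin inj moved in \<open>auto simp: K0_def K1_def intro: inj_on_subset\<close>)
  interpret Q: prob_space ?Q
    by (intro prob_space_PiM prob_space_axioms)
  have "?E \<in> sets (PiM F (\<lambda>_. M))"
  proof -
    have [measurable]: "(\<lambda>y. restrict y K) \<in> PiM F (\<lambda>_. M) \<rightarrow>\<^sub>M PiM K (\<lambda>_. M)"
      using F by (intro measurable_restrict_subset) auto
    have [measurable]: "(\<lambda>y. \<lambda>i\<in>K. y (\<sigma> i)) \<in> PiM F (\<lambda>_. M) \<rightarrow>\<^sub>M PiM K (\<lambda>_. M)"
      using F by (intro measurable_restrict measurable_component_singleton) auto
    show ?thesis
      using B by measurable
  qed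
  moreover have "?AA = {x \<in> space ?Q. restrict x F \<in> ?E}"
    using F by (auto simp: space_PiM PiE_iff cong: restrict_cong)
  ultimately have "emeasure ?Q ?AA = emeasure (PiM F (\<lambda>_. M)) ?E"
    using F by (simp only: emeasure_PiM_restrict_preimage)
  moreover have "emeasure ?Q ?A = emeasure (PiM K (\<lambda>_. M)) B"
    using fin KI(1) B by (rule emeasure_PiM_restrict_preimage)
  ultimately have "ennreal (measure ?Q ?A) ^ 2 \<le> ennreal (measure ?Q ?AA)"
    using core by (simp add: Q.emeasure_eq_measure)
  then show ?thesis
    by (simp add: ennreal_power ennreal_le_iff)
qed

end

section \<open>Locality and relabelling of the AHK world\<close>

definition bounded_subsets :: "nat \<Rightarrow> nat \<Rightarrow> nat set set" where
  "bounded_subsets a n = {A. A \<subseteq> {1..n} \<and> card A \<le> a}"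

lemma bounded_subsets_subset: "bounded_subsets a n \<subseteq> {A. finite A \<and> card A \<le> a}"
  by (auto simp: bounded_subsets_def intro: finite_subset)

lemma finite_bounded_subsets: "finite (bounded_subsets a n)"
  by (rule finite_subset[of _ "Pow {1..n}"]) (auto simp: bounded_subsets_def)

lemma image_bounded_subsets:
  "A \<in> bounded_subsets a n \<Longrightarrow> finite (\<tau> ` A) \<and> card (\<tau> ` A) \<le> a"
  using card_image_le[of A \<tau>] bounded_subsets_subset[of a n] by auto

lemma ar_le_arity_max:
  assumes "signature S ar" "r \<in> S"
  shows "ar r \<le> arity_max S ar"
  using assms unfolding signature_def arity_max_def by (auto intro: Max_ge)

lemma subset_args_in_bounded_subsets:
  assumes "signature S ar" "r \<in> S" "length xs = ar r" "set xs \<subseteq> {1..n}" "A \<subseteq> set xs"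
  shows "A \<in> bounded_subsets (arity_max S ar) n"
proof -
  have "card A \<le> card (set xs)"
    using assms(5) by (intro card_mono) auto
  also have "\<dots> \<le> ar r"
    using card_length[of xs] assms(3) by simp
  also have "\<dots> \<le> arity_max S ar"
    using assms(1,2) by (rule ar_le_arity_max)
  finally show ?thesis
    using assms(4,5) by (auto simp: bounded_subsets_def)
qed

lemma image_nth_sorted_list_of_set_subset:
  assumes "finite E" "I \<subseteq> {1..card E}"
  shows "(\<lambda>h. sorted_list_of_set E ! (h - 1)) ` I \<subseteq> E"
proof
  fix y assume "y \<in> (\<lambda>h. sorted_list_of_set E ! (h - 1)) ` I"
  then obtain h where "h \<in> {1..card E}" "y = sorted_list_of_set E ! (h - 1)"
    using assms(2) by auto
  then show "y \<in> E"
    using assms(1) nth_mem[of "h - 1" "sorted_list_of_set E"] by auto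
qed

lemma block_data_cong:
  assumes "finite E" "\<And>A. A \<subseteq> E \<Longrightarrow> U A = U' A"
  shows "block_data f U E = block_data f U' E"
proof -
  have "U ((\<lambda>h. sorted_list_of_set E ! (h - 1)) ` I) = U' ((\<lambda>h. sorted_list_of_set E ! (h - 1)) ` I)"
    if "I \<subseteq> {1..card E}" for I
    using assms image_nth_sorted_list_of_set_subset[OF assms(1) that] by blast
  then show ?thesis
    unfolding block_data_def Let_def by (intro arg_cong[where f = "f (card E)"] restrict_ext) auto
qed

lemma ahk_world_cong:
  assumes "\<And>A. r \<in> S \<Longrightarrow> length xs = ar r \<Longrightarrow> A \<subseteq> set xs \<Longrightarrow> U A = U' A"
  shows "ahk_world S ar f U r xs = ahk_world S ar f U' r xs"
  unfolding ahk_world_def using assms block_data_cong[of "set xs" U U' f] by auto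

lemma restr_world_ahk_world_restrict:
  assumes "signature S ar"
  shows "restr_world n (ahk_world S ar f U)
    = restr_world n (ahk_world S ar f (restrict U (bounded_subsets (arity_max S ar) n)))"
proof -
  have "ahk_world S ar f U r xs
      = ahk_world S ar f (restrict U (bounded_subsets (arity_max S ar) n)) r xs"
    if "set xs \<subseteq> {1..n}" for r xs
    by (rule ahk_world_cong) (use subset_args_in_bounded_subsets[OF assms _ _ that] in auto)
  then show ?thesis
    by (auto simp: restr_world_def fun_eq_iff)
qed

lemma sorted_list_of_set_image_strict_mono:
  assumes "strict_mono_on D \<tau>" "E \<subseteq> D" "finite E"
  shows "sorted_list_of_set (\<tau> ` E) = map \<tau> (sorted_list_of_set E)"
proof -
  define L where "L = sorted_list_of_set E"
  have L: "sorted_wrt (<) L" "set L = E"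
    using assms(3) by (auto simp: L_def)
  have "inj_on \<tau> E"
    using assms(1,2) strict_mono_on_imp_inj_on inj_on_subset by blast
  moreover have "sorted_wrt (<) (map \<tau> L)"
    unfolding sorted_wrt_map
    by (rule sorted_wrt_mono_rel[OF _ L(1)]) (use assms L(2) in \<open>auto simp: strict_mono_on_def\<close>)
  ultimately show ?thesis
    using assms(3) L(2) sorted_list_of_set_unique[of "\<tau> ` E" "map \<tau> L"]
    by (simp add: L_def card_image)
qed

lemma rank_image_strict_mono:
  assumes "strict_mono_on D \<tau>" "E \<subseteq> D" "x \<in> E" "finite E"
  shows "rank (\<tau> ` E) (\<tau> x) = rank E x"
proof -
  have "inj_on \<tau> E"
    using assms(1,2) strict_mono_on_imp_inj_on inj_on_subset by blast
  moreover have "\<tau> y \<le> \<tau> x \<longleftrightarrow> y \<le> x" if "y \<in> E" for y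
    using assms that by (metis linorder_not_le strict_mono_on_leD strict_mono_onD subsetD)
  then have "{z \<in> \<tau> ` E. z \<le> \<tau> x} = \<tau> ` {y \<in> E. y \<le> x}"
    by auto
  ultimately show ?thesis
    unfolding rank_def by (simp add: card_image inj_on_subset)
qed

lemma ahk_world_relabel:
  assumes mono: "strict_mono_on D \<tau>" and xs: "set xs \<subseteq> D"
    and U': "\<And>A. r \<in> S \<Longrightarrow> length xs = ar r \<Longrightarrow> A \<subseteq> set xs \<Longrightarrow> U' A = U (\<tau> ` A)"
  shows "ahk_world S ar f U r (map \<tau> xs) = ahk_world S ar f U' r xs"
proof (cases "r \<in> S \<and> length xs = ar r")
  case False
  then show ?thesis
    by (auto simp: ahk_world_def)
next
  case True
  define E where "E = set xs"
  define L where "L = sorted_list_of_set E"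
  have E: "finite E" "E \<subseteq> D"
    using xs by (auto simp: E_def)
  have "inj_on \<tau> E"
    using mono E(2) strict_mono_on_imp_inj_on inj_on_subset by blast
  then have card: "card (\<tau> ` E) = card E"
    by (rule card_image)
  have sorted: "sorted_list_of_set (\<tau> ` E) = map \<tau> L"
    unfolding L_def using sorted_list_of_set_image_strict_mono[OF mono E(2,1)] .
  have "U ((\<lambda>h. map \<tau> L ! (h - 1)) ` I) = U' ((\<lambda>h. L ! (h - 1)) ` I)"
    if "I \<subseteq> {1..card E}" for I
  proof -
    have "(\<lambda>h. map \<tau> L ! (h - 1)) ` I = \<tau> ` (\<lambda>h. L ! (h - 1)) ` I"
      using that E(1) by (force simp: L_def image_image)
    then show ?thesis
      using U' True image_nth_sorted_list_of_set_subset[OF E(1) that] by (simp add: L_def E_def)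
  qed
  then have "block_data f U (\<tau> ` E) = block_data f U' E"
    unfolding block_data_def Let_def sorted card L_def[symmetric]
    by (intro arg_cong[where f = "f (card E)"] restrict_ext) simp
  moreover have "map (rank (\<tau> ` E)) (map \<tau> xs) = map (rank E) xs"
    using rank_image_strict_mono[OF mono] E by (auto simp: E_def)
  ultimately show ?thesis
    unfolding ahk_world_def using True by (simp add: E_def del: map_map)
qed

lemma strict_mono_on_nth_pred:
  "sorted_wrt (<) is \<Longrightarrow> strict_mono_on {1..length is} (\<lambda>h. is ! (h - 1))"
  by (auto simp: strict_mono_on_def sorted_wrt_iff_nth_less)

lemma sub_world_ahk_world:
  assumes sig: "signature S ar" and "sorted_wrt (<) is"
  shows "sub_world is (ahk_world S ar f U)
    = restr_world (length is) (ahk_world S ar f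
        (\<lambda>A\<in>bounded_subsets (arity_max S ar) (length is). U ((\<lambda>h. is ! (h - 1)) ` A)))"
proof -
  have "ahk_world S ar f U r (map (\<lambda>h. is ! (h - 1)) xs)
      = ahk_world S ar f (\<lambda>A\<in>bounded_subsets (arity_max S ar) (length is). U ((\<lambda>h. is ! (h - 1)) ` A)) r xs"
    if "set xs \<subseteq> {1..length is}" for r xs
    by (rule ahk_world_relabel[OF strict_mono_on_nth_pred[OF assms(2)] that])
      (use subset_args_in_bounded_subsets[OF sig _ _ that] in auto)
  then show ?thesis
    by (auto simp: sub_world_def restr_world_def fun_eq_iff)
qed

section \<open>Measurability and the distribution of the restricted world\<close>

lemma ahk_world_measurable:
  assumes AHK: "AHK_model S ar f"
    and K: "bounded_subsets (arity_max S ar) N \<subseteq> K" and xs: "set xs \<subseteq> {1..N}"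
  shows "(\<lambda>U. ahk_world S ar f U r xs) \<in> PiM K (\<lambda>_. unit_interval) \<rightarrow>\<^sub>M count_space UNIV"
proof (cases "r \<in> S \<and> length xs = ar r")
  case False
  then have "(\<lambda>U. ahk_world S ar f U r xs) = (\<lambda>_. False)"
    by (auto simp: ahk_world_def fun_eq_iff)
  then show ?thesis
    by (simp only:) (rule measurable_const, simp)
next
  case True
  define m where "m = card (set xs)"
  define L where "L = sorted_list_of_set (set xs)"
  have sig: "signature S ar"
    using AHK by (simp add: AHK_model_def)
  have "xs \<noteq> []"
    using sig True by (auto simp: signature_def)
  then have "1 \<le> m"
    by (simp add: m_def Suc_le_eq card_gt_0_iff)
  moreover have "m \<le> arity_max S ar"
    using card_length[of xs] True ar_le_arity_max[OF sig, of r] unfolding m_def by linarith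
  ultimately have f_measurable: "f m \<in> cube m \<rightarrow>\<^sub>M count_space (data_space S ar m)"
    using AHK by (simp add: AHK_model_def)
  have coords: "(\<lambda>U. \<lambda>I\<in>Pow {1..m}. U ((\<lambda>h. L ! (h - 1)) ` I)) \<in> PiM K (\<lambda>_. unit_interval) \<rightarrow>\<^sub>M cube m"
    unfolding cube_def
  proof (intro measurable_restrict measurable_component_singleton)
    fix I assume "I \<in> Pow {1..m}"
    then have "(\<lambda>h. L ! (h - 1)) ` I \<subseteq> set xs"
      using image_nth_sorted_list_of_set_subset[of "set xs" I] by (simp add: L_def m_def)
    then show "(\<lambda>h. L ! (h - 1)) ` I \<in> K"
      using subset_args_in_bounded_subsets[OF sig _ _ xs] True K by blast
  qed
  have "(\<lambda>U. ahk_world S ar f U r xs)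
      = (\<lambda>D. D r (map (rank (set xs)) xs)) \<circ> f m \<circ> (\<lambda>U. \<lambda>I\<in>Pow {1..m}. U ((\<lambda>h. L ! (h - 1)) ` I))"
    using True by (simp add: ahk_world_def block_data_def Let_def m_def L_def fun_eq_iff)
  then show ?thesis
    using measurable_comp[OF coords measurable_comp[OF f_measurable measurable_count_space]] by simp
qed

definition world_args :: "'r set \<Rightarrow> ('r \<Rightarrow> nat) \<Rightarrow> nat \<Rightarrow> ('r \<times> nat list) set" where
  "world_args S ar N = {(r, xs). r \<in> S \<and> length xs = ar r \<and> set xs \<subseteq> {1..N}}"

lemma finite_world_args:
  assumes "signature S ar"
  shows "finite (world_args S ar N)"
proof (rule finite_subset)
  show "world_args S ar N \<subseteq> S \<times> {xs. set xs \<subseteq> {1..N} \<and> length xs \<le> arity_max S ar}"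
    using ar_le_arity_max[OF assms] by (auto simp: world_args_def)
  show "finite (S \<times> {xs. set xs \<subseteq> {1..N} \<and> length xs \<le> arity_max S ar})"
    using assms by (intro finite_cartesian_product finite_lists_length_le) (auto simp: signature_def)
qed

lemma world_eqI:
  assumes w: "w \<in> worlds S ar N" "w' \<in> worlds S ar N"
    and eq: "\<And>r xs. (r, xs) \<in> world_args S ar N \<Longrightarrow> w r xs = w' r xs"
  shows "w = w'"
proof (intro ext)
  fix r xs
  show "w r xs = w' r xs"
  proof (cases "(r, xs) \<in> world_args S ar N")
    case False
    then have "\<not> w r xs" "\<not> w' r xs"
      using w unfolding worlds_def is_world_def world_args_def by blast+
    then show ?thesis
      by simp
  qed (rule eq)
qed

lemma finite_worlds:
  assumes "signature S ar"
  shows "finite (worlds S ar N)"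
proof (rule inj_on_finite[where B = "Pow (world_args S ar N)"])
  show "inj_on (\<lambda>w. {t \<in> world_args S ar N. w (fst t) (snd t)}) (worlds S ar N)"
    by (rule inj_onI, rule world_eqI) (auto simp: set_eq_iff)
qed (use finite_world_args[OF assms] in auto)

lemma restr_world_in_worlds: "restr_world N (ahk_world S ar f U) \<in> worlds S ar N"
  by (auto simp: worlds_def is_world_def restr_world_def ahk_world_def)

lemma restr_world_ahk_world_measurable:
  assumes AHK: "AHK_model S ar f" and K: "bounded_subsets (arity_max S ar) N \<subseteq> K"
  shows "(\<lambda>U. restr_world N (ahk_world S ar f U))
    \<in> PiM K (\<lambda>_. unit_interval) \<rightarrow>\<^sub>M count_space (worlds S ar N)"
proof -
  have sig: "signature S ar"
    using AHK by (simp add: AHK_model_def)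
  let ?M = "PiM K (\<lambda>_. unit_interval)"
  have "(\<lambda>U. restr_world N (ahk_world S ar f U)) -` {w} \<inter> space ?M \<in> sets ?M"
    if w: "w \<in> worlds S ar N" for w
  proof -
    have eq: "restr_world N (ahk_world S ar f U) = w
        \<longleftrightarrow> (\<forall>t \<in> world_args S ar N. ahk_world S ar f U (fst t) (snd t) = w (fst t) (snd t))" for U
    proof
      assume "\<forall>t \<in> world_args S ar N. ahk_world S ar f U (fst t) (snd t) = w (fst t) (snd t)"
      then show "restr_world N (ahk_world S ar f U) = w"
        by (intro world_eqI[OF restr_world_in_worlds w]) (auto simp: restr_world_def world_args_def)
    qed (auto simp: restr_world_def world_args_def)
    have "{U \<in> space ?M. ahk_world S ar f U (fst t) (snd t) = w (fst t) (snd t)} \<in> sets ?M"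
      if "t \<in> world_args S ar N" for t
    proof -
      have "(\<lambda>U. ahk_world S ar f U (fst t) (snd t)) \<in> ?M \<rightarrow>\<^sub>M count_space UNIV"
        using that by (intro ahk_world_measurable[OF AHK K]) (auto simp: world_args_def)
      then show ?thesis
        by measurable
    qed
    then have "{U \<in> space ?M. \<forall>t \<in> world_args S ar N. ahk_world S ar f U (fst t) (snd t) = w (fst t) (snd t)}
        \<in> sets ?M"
      using finite_world_args[OF sig] by (rule sets.sets_Collect_finite_All)
    then show ?thesis
      unfolding eq[symmetric] by (simp add: vimage_def Int_def conj_commute)
  qed
  then show ?thesis
    using countable_finite[OF finite_worlds[OF sig]] restr_world_in_worlds
    by (subst measurable_count_space_eq_countable) auto
qed

definition world_event ::
  "'r set \<Rightarrow> ('r \<Rightarrow> nat) \<Rightarrow> (nat \<Rightarrow> (nat set \<Rightarrow> real) \<Rightarrow> 'r world) \<Rightarrow> nat \<Rightarrow> 'r world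
    \<Rightarrow> (nat set \<Rightarrow> real) set" where
  "world_event S ar f n \<omega> =
     {U \<in> space (PiM (bounded_subsets (arity_max S ar) n) (\<lambda>_. unit_interval)).
        restr_world n (ahk_world S ar f U) = \<omega>}"

lemma world_event_sets:
  assumes "AHK_model S ar f" "\<omega> \<in> worlds S ar n"
  shows "world_event S ar f n \<omega> \<in> sets (PiM (bounded_subsets (arity_max S ar) n) (\<lambda>_. unit_interval))"
proof -
  have "world_event S ar f n \<omega> = (\<lambda>U. restr_world n (ahk_world S ar f U)) -` {\<omega>}
      \<inter> space (PiM (bounded_subsets (arity_max S ar) n) (\<lambda>_. unit_interval))"
    by (auto simp: world_event_def)
  then show ?thesis
    using measurable_sets[OF restr_world_ahk_world_measurable[OF assms(1) order_refl]] assms(2)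
    by simp
qed

lemma reindex_in_space_PiM:
  assumes "U \<in> space (U_space a)" "\<And>A. A \<in> K \<Longrightarrow> finite (g A) \<and> card (g A) \<le> a"
  shows "(\<lambda>A\<in>K. U (g A)) \<in> space (PiM K (\<lambda>_. unit_interval))"
  using assms by (auto simp: U_space_def space_PiM)

lemma restr_world_ahk_world_eq_iff:
  assumes "signature S ar" "U \<in> space (U_space (arity_max S ar))"
  shows "restr_world n (ahk_world S ar f U) = \<omega>
    \<longleftrightarrow> restrict U (bounded_subsets (arity_max S ar) n) \<in> world_event S ar f n \<omega>"
proof -
  have "restrict U (bounded_subsets (arity_max S ar) n)
      \<in> space (PiM (bounded_subsets (arity_max S ar) n) (\<lambda>_. unit_interval))"
    using reindex_in_space_PiM[OF assms(2), of "bounded_subsets (arity_max S ar) n" "\<lambda>A. A"]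
      bounded_subsets_subset by blast
  then show ?thesis
    using restr_world_ahk_world_restrict[OF assms(1), of n f U] by (auto simp: world_event_def)
qed

lemma sub_world_ahk_world_eq_iff:
  assumes "signature S ar" "sorted_wrt (<) is" "U \<in> space (U_space (arity_max S ar))"
  shows "sub_world is (ahk_world S ar f U) = \<omega>
    \<longleftrightarrow> (\<lambda>A\<in>bounded_subsets (arity_max S ar) (length is). U ((\<lambda>h. is ! (h - 1)) ` A))
          \<in> world_event S ar f (length is) \<omega>"
proof -
  have "(\<lambda>A\<in>bounded_subsets (arity_max S ar) (length is). U ((\<lambda>h. is ! (h - 1)) ` A))
      \<in> space (PiM (bounded_subsets (arity_max S ar) (length is)) (\<lambda>_. unit_interval))"
    using image_bounded_subsets by (rule reindex_in_space_PiM[OF assms(3)])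
  then show ?thesis
    using sub_world_ahk_world[OF assms(1,2), of f U] by (auto simp: world_event_def)
qed

lemma measure_ahk_dist:
  assumes "AHK_model S ar f" "A \<subseteq> worlds S ar N"
  shows "measure (ahk_dist S ar f N) A = measure (U_space (arity_max S ar))
    {U \<in> space (U_space (arity_max S ar)). restr_world N (ahk_world S ar f U) \<in> A}"
proof -
  have "(\<lambda>U. restr_world N (ahk_world S ar f U))
      \<in> U_space (arity_max S ar) \<rightarrow>\<^sub>M count_space (worlds S ar N)"
    unfolding U_space_def by (rule restr_world_ahk_world_measurable[OF assms(1) bounded_subsets_subset])
  then show ?thesis
    unfolding ahk_dist_def using assms(2) by (subst measure_distr) (auto simp: vimage_def Int_def conj_commute)
qed

lemma restr_world_restr_world: "n \<le> N \<Longrightarrow> restr_world n (restr_world N w) = restr_world n w"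
  by (auto simp: restr_world_def fun_eq_iff)

lemma sub_world_restr_world:
  assumes "set is \<subseteq> {1..N}"
  shows "sub_world is (restr_world N w) = sub_world is w"
proof -
  have "is ! (h - 1) \<in> {1..N}" if "h \<in> {1..length is}" for h
  proof -
    have "h - 1 < length is"
      using that by auto
    then show ?thesis
      using nth_mem assms by blast
  qed
  then show ?thesis
    by (auto simp: sub_world_def restr_world_def fun_eq_iff)
qed

lemma measure_ahk_dist_singleton:
  assumes AHK: "AHK_model S ar f" and "\<omega> \<in> worlds S ar n"
  shows "measure (ahk_dist S ar f n) {\<omega>} = measure (U_space (arity_max S ar))
    {U \<in> space (U_space (arity_max S ar)).
       restrict U (bounded_subsets (arity_max S ar) n) \<in> world_event S ar f n \<omega>}"
proof -
  have sig: "signature S ar"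
    using AHK by (simp add: AHK_model_def)
  have "{U \<in> space (U_space (arity_max S ar)). restr_world n (ahk_world S ar f U) \<in> {\<omega>}}
    = {U \<in> space (U_space (arity_max S ar)).
         restrict U (bounded_subsets (arity_max S ar) n) \<in> world_event S ar f n \<omega>}"
    using restr_world_ahk_world_eq_iff[OF sig] by auto
  then show ?thesis
    using assms(2) by (simp add: measure_ahk_dist[OF AHK])
qed

lemma measure_ahk_dist_sub_worlds:
  assumes AHK: "AHK_model S ar f" and "is": "sorted_wrt (<) is" "set is \<subseteq> {1..N}"
    and n: "length is = n" "n \<le> N"
  shows "measure (ahk_dist S ar f N)
      {\<omega>' \<in> worlds S ar N. restr_world n \<omega>' = \<omega> \<and> sub_world is \<omega>' = \<omega>}
    = measure (U_space (arity_max S ar))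
      {U \<in> space (U_space (arity_max S ar)).
         restrict U (bounded_subsets (arity_max S ar) n) \<in> world_event S ar f n \<omega> \<and>
         (\<lambda>A\<in>bounded_subsets (arity_max S ar) n. U ((\<lambda>h. is ! (h - 1)) ` A))
           \<in> world_event S ar f n \<omega>}"
proof -
  have sig: "signature S ar"
    using AHK by (simp add: AHK_model_def)
  have "restr_world N (ahk_world S ar f U)
      \<in> {\<omega>' \<in> worlds S ar N. restr_world n \<omega>' = \<omega> \<and> sub_world is \<omega>' = \<omega>}
    \<longleftrightarrow> restr_world n (ahk_world S ar f U) = \<omega> \<and> sub_world is (ahk_world S ar f U) = \<omega>" for U
    using n(2) by (simp add: restr_world_in_worlds restr_world_restr_world sub_world_restr_world[OF "is"(2)])
  then have "{U \<in> space (U_space (arity_max S ar)). restr_world N (ahk_world S ar f U)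
        \<in> {\<omega>' \<in> worlds S ar N. restr_world n \<omega>' = \<omega> \<and> sub_world is \<omega>' = \<omega>}}
    = {U \<in> space (U_space (arity_max S ar)).
         restrict U (bounded_subsets (arity_max S ar) n) \<in> world_event S ar f n \<omega> \<and>
         (\<lambda>A\<in>bounded_subsets (arity_max S ar) n. U ((\<lambda>h. is ! (h - 1)) ` A))
           \<in> world_event S ar f n \<omega>}"
    using restr_world_ahk_world_eq_iff[OF sig, of _ n f \<omega>]
      sub_world_ahk_world_eq_iff[OF sig "is"(1), of _ f \<omega>, unfolded n(1)]
    by blast
  then show ?thesis
    by (subst measure_ahk_dist[OF AHK]) auto
qed

lemma inj_on_image_bounded_subsets:
  "inj_on \<tau> {1..n} \<Longrightarrow> inj_on (\<lambda>A. \<tau> ` A) (bounded_subsets a n)"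
  by (auto simp: inj_on_def bounded_subsets_def inj_on_image_eq_iff)

lemma nth_upt_append_Suc:
  assumes "h \<in> {1..n}"
  shows "([1..<n] @ [n + 1]) ! (h - 1) = (if h = n then n + 1 else h)"
  using assms by (auto simp: nth_append)

lemma image_nth_upt_append_Suc:
  assumes "A \<in> bounded_subsets a n" "(\<lambda>h. ([1..<n] @ [n + 1]) ! (h - 1)) ` A \<in> bounded_subsets a n"
  shows "(\<lambda>h. ([1..<n] @ [n + 1]) ! (h - 1)) ` A = A"
proof -
  have A: "A \<subseteq> {1..n}"
    using assms(1) by (simp add: bounded_subsets_def)
  have "n \<notin> A"
    using assms(2) nth_upt_append_Suc[of n n] by (force simp: bounded_subsets_def)
  then show ?thesis
    using A nth_upt_append_Suc[of _ n] by (auto simp: image_iff subset_iff)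
qed

lemma prob_space_unit_interval: "prob_space unit_interval"
  unfolding unit_interval_def
  by (rule prob_spaceI) (simp add: emeasure_restrict_space space_restrict_space)

theorem proposition3:
  fixes S :: "'r set" and ar :: "'r \<Rightarrow> nat"
    and f :: "nat \<Rightarrow> (nat set \<Rightarrow> real) \<Rightarrow> 'r world"
    and n :: nat and \<omega> :: "'r world"
  assumes "AHK_model S ar f"
    and "1 \<le> n"
    and "\<omega> \<in> worlds S ar n"
    and "measure (ahk_dist S ar f n) {\<omega>} > 0"
  shows "measure (ahk_dist S ar f (n + 1))
           {\<omega>' \<in> worlds S ar (n + 1). restr_world n \<omega>' = \<omega> \<and>
                                       sub_world ([1..<n] @ [n + 1]) \<omega>' = \<omega>}
         \<ge> (measure (ahk_dist S ar f n) {\<omega>})\<^sup>2"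
proof -
  let ?is = "[1..<n] @ [n + 1]"
  have "is": "sorted_wrt (<) ?is" "set ?is \<subseteq> {1..n + 1}" "length ?is = n"
    using assms(2) by (auto simp: sorted_wrt_append)
  have "inj_on (\<lambda>h. ?is ! (h - 1)) {1..n}"
    using strict_mono_on_imp_inj_on[OF strict_mono_on_nth_pred[OF "is"(1)]] "is"(3) by simp
  then have "(measure (U_space (arity_max S ar))
      {U \<in> space (U_space (arity_max S ar)).
         restrict U (bounded_subsets (arity_max S ar) n) \<in> world_event S ar f n \<omega>})\<^sup>2
    \<le> measure (U_space (arity_max S ar))
      {U \<in> space (U_space (arity_max S ar)).
         restrict U (bounded_subsets (arity_max S ar) n) \<in> world_event S ar f n \<omega> \<and>
         (\<lambda>A\<in>bounded_subsets (arity_max S ar) n. U ((\<lambda>h. ?is ! (h - 1)) ` A))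
           \<in> world_event S ar f n \<omega>}"
    unfolding U_space_def
    using bounded_subsets_subset image_nth_upt_append_Suc
      image_bounded_subsets[of _ _ _ "\<lambda>h. ?is ! (h - 1)"]
    by (intro prob_space.measure_PiM_square_le_reindexed prob_space_unit_interval
        finite_bounded_subsets inj_on_image_bounded_subsets world_event_sets assms(1,3)) auto
  then show ?thesis
    using measure_ahk_dist_singleton[OF assms(1,3)]
      measure_ahk_dist_sub_worlds[OF assms(1) "is"(1,2,3)] by simp
qed

end
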